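(* Let $n\ge 8$ and let $T=(l_1,\dots,l_n)$, $l_1\le\cdots\le l_n$, be an impossibly burnable $n$-path forest of order $m^2$ with $l_1=M_n$. Then $B_m(l_i)\in\{3,4\}$ for every $i\in[n]$. Moreover, in this situation $l_1$ is odd (equivalently $B_m(l_1)=3$).
   Context: A path forest is a disjoint union of paths; an $n$-path forest is represented by the tuple $(l_1,\dots,l_n)$ of its path orders, with total order $\sum_i l_i=m^2$. For $m\in\mathbb{N}$ and an integer $1\le l\le m^2$, let $B_m(l)$ be the least positive integer $t$ with $t\equiv l\pmod 2$ such that $l\le 2mt-t^2$. An $n$-path forest of order $m^2$ is impossibly burnable if $\sum_{i=1}^n B_m(l_i)>m$. For $n\ge2$, $M_n$ denotes the maximum of $l_1$ over all impossibly burnable $n$-path forests. *)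

theory Defs
  imports Main
begin

definition B :: "nat \<Rightarrow> nat \<Rightarrow> nat" where
  "B m l = (LEAST t. 0 < t \<and> t mod 2 = l mod 2 \<and>
              int l \<le> 2 * int m * int t - int t ^ 2)"

definition path_forest_of_order :: "nat \<Rightarrow> nat list \<Rightarrow> bool" where
  "path_forest_of_order m ls \<longleftrightarrow> (\<forall>x\<in>set ls. 1 \<le> x) \<and> sum_list ls = m ^ 2"

definition impossibly_burnable :: "nat \<Rightarrow> nat list \<Rightarrow> bool" where
  "impossibly_burnable m ls \<longleftrightarrow>
     path_forest_of_order m ls \<and> sum_list (map (B m) ls) > m"

definition M :: "nat \<Rightarrow> nat" where
  "M n = (GREATEST x. x \<in> {ls ! 0 | ls m. length ls = n \<and> sorted ls \<and>
                                        impossibly_burnable m ls})"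

end

theory Submission
  imports Defs "HOL-Library.Discrete_Functions"
begin

text \<open>Write \<open>b\<^sub>i = B\<^sub>m(l\<^sub>i)\<close>. By parity \<open>\<Sum> b\<^sub>i \<ge> m + 2\<close>, and minimality of \<open>B\<^sub>m\<close> gives
  \<open>l\<^sub>i \<ge> (b\<^sub>i - 2)(2m - b\<^sub>i + 2) + 2\<close> whenever \<open>b\<^sub>i \<ge> 3\<close>. Summing these bounds against
  \<open>\<Sum> l\<^sub>i = m\<^sup>2\<close> shows that a forest with \<open>l\<^sub>1 \<ge> 9n - 5\<close> has \<open>m \<le> 4n - 3\<close>; for such forests
  \<open>(3m - l\<^sub>1)(4n - 2 - m)\<close> equals \<open>6n - 4\<close> plus a sum of nonnegative deficits, one of which is
  large as soon as some \<open>b\<^sub>i \<notin> {3, 4}\<close>, and this forces \<open>l\<^sub>1\<close> to be small.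
  An explicit forest with \<open>\<lfloor>\<surd>(2n)\<rfloor>\<close> paths of burning number 3 and the others of burning
  number 4 has a larger first path, so a forest realising \<open>M\<^sub>n\<close> has all \<open>b\<^sub>i \<in> {3, 4}\<close>.
  Finally \<open>b\<^sub>1 = 4\<close> would give \<open>l\<^sub>1 \<ge> 4m - 2 > 3m\<close>, so \<open>b\<^sub>1 = 3\<close> and \<open>l\<^sub>1\<close> is odd.\<close>

section \<open>Burning numbers of paths\<close>

definition feasible_burn_time :: "nat \<Rightarrow> nat \<Rightarrow> nat \<Rightarrow> bool" where
  "feasible_burn_time m l t \<longleftrightarrow>
     0 < t \<and> t mod 2 = l mod 2 \<and> int l \<le> 2 * int m * int t - int t ^ 2"

lemma B_eq_Least_feasible: "B m l = (LEAST t. feasible_burn_time m l t)"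
  unfolding B_def feasible_burn_time_def ..

lemma feasible_burn_time_witness:
  assumes "1 \<le> l" and "l \<le> m^2"
  shows "feasible_burn_time m l (if m mod 2 = l mod 2 then m else m + 1)"
proof (cases "m mod 2 = l mod 2")
  case True
  have "int l \<le> int m ^ 2"
    using assms(2) by (metis of_nat_le_iff of_nat_power)
  moreover have "0 < m"
    using assms by (cases m) auto
  ultimately show ?thesis
    using True by (simp add: feasible_burn_time_def power2_eq_square)
next
  case False
  then have "l \<noteq> m^2"
    by (auto simp: power2_eq_square mod2_eq_if)
  then have "int l < int m ^ 2"
    using assms(2) by (simp flip: of_nat_power)
  moreover have "2 * int m * int (m + 1) - int (m + 1) ^ 2 = int m ^ 2 - 1"
    by (simp add: algebra_simps power2_eq_square)
  moreover have "(m + 1) mod 2 = l mod 2"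
    using False by presburger
  ultimately show ?thesis
    using False by (simp add: feasible_burn_time_def)
qed

lemma
  assumes "1 \<le> l" and "l \<le> m^2"
  shows feasible_burn_time_B: "feasible_burn_time m l (B m l)"
    and B_le_Suc: "B m l \<le> m + 1"
proof -
  note witness = feasible_burn_time_witness[OF assms]
  show "feasible_burn_time m l (B m l)"
    unfolding B_eq_Least_feasible using witness by (rule LeastI)
  have "B m l \<le> (if m mod 2 = l mod 2 then m else m + 1)"
    unfolding B_eq_Least_feasible using witness by (rule Least_le)
  then show "B m l \<le> m + 1"
    by (auto split: if_splits)
qed

lemma B_parity:
  assumes "1 \<le> l" and "l \<le> m^2"
  shows "B m l mod 2 = l mod 2"
  using feasible_burn_time_B[OF assms] by (simp add: feasible_burn_time_def)

text \<open>With \<open>t = B m l\<close>, the time \<open>t - 2\<close> has the right parity but is not feasible, so \<open>l\<close>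
  exceeds \<open>2m(t - 2) - (t - 2)\<^sup>2\<close>; by parity it does so by at least 2.\<close>
lemma B_lower_bound:
  assumes "1 \<le> l" and "l \<le> m^2" and "3 \<le> B m l"
  shows "(int (B m l) - 2) * (2 * int m - int (B m l) + 2) + 2 \<le> int l"
proof -
  define t where "t = B m l"
  have t3: "3 \<le> t"
    using assms(3) by (simp add: t_def)
  have feasible: "feasible_burn_time m l t"
    unfolding t_def using assms(1,2) by (rule feasible_burn_time_B)
  have "t - 2 < t"
    using t3 by simp
  then have "\<not> feasible_burn_time m l (t - 2)"
    unfolding t_def B_eq_Least_feasible by (rule not_less_Least)
  moreover have "(t - 2) mod 2 = l mod 2"
    using feasible t3 unfolding feasible_burn_time_def by (auto simp: mod2_eq_if)
  ultimately have gt: "2 * int m * (int t - 2) - (int t - 2)^2 < int l"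
    using t3 unfolding feasible_burn_time_def by (auto simp: of_nat_diff)
  have "l mod 2 = t mod 2"
    using feasible unfolding feasible_burn_time_def by simp
  then have "even l \<longleftrightarrow> even t"
    by (simp add: even_iff_mod_2_eq_zero)
  then have "even (int l - int t)"
    by simp
  moreover have "even (int t * (int t - 3))"
    by (cases "even (int t)") auto
  moreover have "int l - (2 * int m * (int t - 2) - (int t - 2)^2)
      = (int l - int t) + int t * (int t - 3) + 4 - 2 * (int m * (int t - 2))"
    by (simp add: algebra_simps power2_eq_square)
  ultimately have "even (int l - (2 * int m * (int t - 2) - (int t - 2)^2))"
    by simp
  then obtain k where k: "int l - (2 * int m * (int t - 2) - (int t - 2)^2) = 2 * k"
    by (elim evenE)
  with gt have "1 \<le> k"
    by linarith
  with k have "2 * int m * (int t - 2) - (int t - 2)^2 + 2 \<le> int l"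
    by linarith
  then show ?thesis
    unfolding t_def by (simp add: algebra_simps power2_eq_square)
qed

lemma B_eqI:
  assumes "1 \<le> t" and "t mod 2 = l mod 2" and "t \<le> m + 2"
    and "int l \<le> 2 * int m * int t - int t ^ 2"
    and "t \<le> 2 \<or> 2 * int m * (int t - 2) - (int t - 2)^2 < int l"
  shows "B m l = t"
  unfolding B_eq_Least_feasible
proof (rule Least_equality)
  show "feasible_burn_time m l t"
    using assms(1,2,4) by (simp add: feasible_burn_time_def)
next
  fix s assume s: "feasible_burn_time m l s"
  show "t \<le> s"
  proof (rule ccontr)
    assume "\<not> t \<le> s"
    moreover have "s mod 2 = t mod 2"
      using s assms(2) by (simp add: feasible_burn_time_def)
    ultimately have "s + 2 \<le> t"
      by presburger
    have "(2 * int m * (int t - 2) - (int t - 2)^2) - (2 * int m * int s - int s ^ 2)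
        = (int t - 2 - int s) * (2 * int m - (int t - 2) - int s)"
      by (simp add: algebra_simps power2_eq_square)
    moreover have "0 \<le> (int t - 2 - int s) * (2 * int m - (int t - 2) - int s)"
      using \<open>s + 2 \<le> t\<close> assms(3) by simp
    ultimately show False
      using s assms(5) \<open>s + 2 \<le> t\<close> unfolding feasible_burn_time_def by linarith
  qed
qed

lemma B_eq_4:
  assumes "even l" and "4 * m - 4 < l" and "l + 16 \<le> 8 * m" and "2 \<le> m"
  shows "B m l = 4"
proof (rule B_eqI)
  show "4 mod 2 = l mod 2"
    using assms(1) by (simp add: even_iff_mod_2_eq_zero)
  have "int l + 16 \<le> 8 * int m"
    using assms(3) by linarith
  then show "int l \<le> 2 * int m * int 4 - int 4 ^ 2"
    by simp
  have "4 * int m - 4 < int l"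
    using assms(2,4) by linarith
  then show "4 \<le> 2 \<or> 2 * int m * (int 4 - 2) - (int 4 - 2)^2 < int l"
    by simp
qed (use assms in auto)

section \<open>Numerical constraints of an impossibly burnable forest\<close>

text \<open>The integer data of a sorted impossibly burnable forest: \<open>l i\<close> is the order of the
  \<open>i\<close>-th path, \<open>b i = B\<^sub>m(l i)\<close> and \<open>L = l 0\<close>. The bound \<open>m + 2\<close> in \<open>burn_sum\<close>
  (rather than \<open>m + 1\<close>) holds because \<open>\<Sum> b\<^sub>i \<equiv> \<Sum> l\<^sub>i = m\<^sup>2 \<equiv> m\<close> modulo 2.\<close>
locale burning_constraints =
  fixes n :: nat and m L :: int and l b :: "nat \<Rightarrow> int"
  assumes n_ge_8: "8 \<le> n"
    and m_nonneg: "0 \<le> m"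
    and min_le: "\<And>i. i < n \<Longrightarrow> L \<le> l i"
    and min_eq: "l 0 = L"
    and path_pos: "\<And>i. i < n \<Longrightarrow> 1 \<le> l i"
    and path_sum: "(\<Sum>i<n. l i) = m^2"
    and burn_sum: "m + 2 \<le> (\<Sum>i<n. b i)"
    and burn_pos: "\<And>i. i < n \<Longrightarrow> 1 \<le> b i"
    and burn_le: "\<And>i. i < n \<Longrightarrow> b i \<le> m + 1"
    and burn_minimal: "\<And>i. i < n \<Longrightarrow> 3 \<le> b i \<Longrightarrow> (b i - 2) * (2*m - b i + 2) + 2 \<le> l i"
begin

lemma n_times_min_le: "int n * L \<le> m^2"
proof -
  have "(\<Sum>i<n. L) \<le> (\<Sum>i<n. l i)"
    by (rule sum_mono) (simp add: min_le)
  then show ?thesis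
    using path_sum by simp
qed

lemma path_le: "i < n \<Longrightarrow> l i \<le> m^2"
  unfolding path_sum[symmetric] using path_pos
  by (intro member_le_sum) (auto intro: order.trans[OF zero_le_one])

lemma m_ge_3: "3 \<le> m"
proof (rule ccontr)
  assume "\<not> 3 \<le> m"
  then have "m^2 \<le> 2^2"
    using m_nonneg by (intro power_mono) auto
  moreover have "(\<Sum>i<n. (1::int)) \<le> (\<Sum>i<n. l i)"
    by (rule sum_mono) (simp add: path_pos)
  ultimately show False
    using n_ge_8 path_sum by simp
qed

lemma burn_le_m: "i < n \<Longrightarrow> b i \<le> m"
proof (rule ccontr)
  assume i: "i < n" and "\<not> b i \<le> m"
  then have "b i = m + 1"
    using burn_le[OF i] by simp
  then have "(m - 1) * (m + 1) + 2 \<le> l i"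
    using burn_minimal[OF i] m_ge_3 by (simp add: add.commute)
  moreover have "(m - 1) * (m + 1) = m^2 - 1"
    by (simp add: algebra_simps power2_eq_square)
  ultimately show False
    using path_le[OF i] by simp
qed

text \<open>The slacks \<open>m b\<^sub>i - l\<^sub>i\<close> add up to at least \<open>2m\<close> (\<open>slack_sum_ge\<close>), but a single
  slack is at most 2 once \<open>4 \<le> b\<^sub>i \<le> m\<close>.\<close>
lemma slack_le:
  assumes "i < n" and "3 \<le> b i"
  shows "m * b i - l i \<le> (b i - 4) * (b i - m) + 2"
proof -
  have "m * b i - ((b i - 2) * (2*m - b i + 2) + 2) = (b i - 4) * (b i - m) + 2"
    by (simp add: algebra_simps)
  then show ?thesis
    using burn_minimal[OF assms] by linarith
qed

lemma slack_sum_ge: "2 * m \<le> (\<Sum>i<n. m * b i - l i)"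
proof -
  have "(\<Sum>i<n. m * b i - l i) = m * (\<Sum>i<n. b i) - m^2"
    by (simp add: sum_subtractf sum_distrib_left path_sum)
  also have "\<dots> \<ge> m * (m + 2) - m^2"
    using burn_sum m_nonneg by (simp add: mult_left_mono)
  finally show ?thesis
    by (simp add: algebra_simps power2_eq_square)
qed

lemma min_le_4m: "L \<le> 4*m - 2"
proof (rule ccontr)
  assume "\<not> L \<le> 4*m - 2"
  then have large: "4*m - 1 \<le> L"
    by simp
  have "m * b i - l i \<le> 2" if i: "i < n" for i
  proof (cases "4 \<le> b i")
    case True
    then have "(b i - 4) * (b i - m) \<le> 0"
      using burn_le_m[OF i] by (simp add: mult_nonneg_nonpos)
    then show ?thesis
      using slack_le[OF i] True by linarith
  next
    case False
    then have "m * b i \<le> m * 3"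
      using m_nonneg by (simp add: mult_left_mono)
    then show ?thesis
      using min_le[OF i] large m_ge_3 by linarith
  qed
  then have "(\<Sum>i<n. m * b i - l i) \<le> (\<Sum>i<n. 2)"
    by (intro sum_mono) simp
  then have "m \<le> int n"
    using slack_sum_ge by simp
  moreover have "int n * (4*m - 1) \<le> m^2"
    using n_times_min_le large n_ge_8 by (meson mult_left_mono of_nat_0_le_iff order_trans)
  ultimately have "int n * (4*m - 1) \<le> int n * m"
    by (smt (verit) m_nonneg mult_right_mono power2_eq_square)
  then show False
    using n_ge_8 m_ge_3 by simp
qed

lemma burn_sum_lt: "(\<Sum>i<n. b i) < m + 2 * int n"
proof -
  have "m * (b i - 2) < l i" if i: "i < n" for i
  proof (cases "3 \<le> b i")
    case True
    have "(b i - 2) * (m + 1) \<le> (b i - 2) * (2*m - b i + 2)"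
      using True burn_le[OF i] by (intro mult_left_mono) auto
    moreover have "m * (b i - 2) \<le> (b i - 2) * (m + 1)"
      using True by (simp add: algebra_simps)
    ultimately show ?thesis
      using burn_minimal[OF i True] by linarith
  next
    case False
    then have "m * (b i - 2) \<le> 0"
      using m_nonneg by (simp add: mult_nonneg_nonpos)
    then show ?thesis
      using path_pos[OF i] by linarith
  qed
  then have "(\<Sum>i<n. m * (b i - 2)) < (\<Sum>i<n. l i)"
    using n_ge_8 by (intro sum_strict_mono) (auto simp: lessThan_empty_iff)
  then have "m * (\<Sum>i<n. b i) < m * (m + 2 * int n)"
    by (simp add: sum_distrib_left[symmetric] sum_subtractf algebra_simps path_sum power2_eq_square)
  then show ?thesis
    using m_nonneg by (simp add: mult_less_cancel_left)
qed

lemma long_path_lower: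
  assumes "i < n" and "4 \<le> b i" and "b i - 4 \<le> X"
  shows "4*m - 2 + (b i - 4) * (2*m - 4 - X) \<le> l i"
proof -
  have "(b i - 4) * (m - 4 - X) \<le> (b i - 4) * (m - b i)"
    using assms(2,3) by (intro mult_left_mono) auto
  moreover have "m * b i - 2 - (b i - 4) * (b i - m)
      = 4*m - 2 + m * (b i - 4) + (b i - 4) * (m - b i)"
    by (simp add: algebra_simps)
  ultimately show ?thesis
    using slack_le[OF assms(1)] assms(2) by (simp add: algebra_simps)
qed

text \<open>Here \<open>a\<close> counts the paths with \<open>b\<^sub>i \<le> 3\<close> and \<open>X\<close> is the total excess
  \<open>\<Sum> (b\<^sub>i - 4)\<close> over the remaining paths; the last bound comes from
  \<open>long_path_lower\<close>.\<close>
lemma short_path_count: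
  obtains a X :: int
  where "0 \<le> a" "a \<le> int n" "a = int n \<Longrightarrow> X = 0"
    "(\<Sum>i<n. b i) \<le> 4 * int n - a + X"
    "4 * int n - 3 * a + X \<le> (\<Sum>i<n. b i)"
    "a * L + (int n - a) * (4*m - 2) + X * (2*m - 4 - X) \<le> m^2"
proof -
  define short where "short i = (if b i \<le> 3 then 1 else (0::int))" for i
  define excess where "excess i = (if b i \<le> 3 then 0 else b i - 4)" for i
  define a where "a = (\<Sum>i<n. short i)"
  define X where "X = (\<Sum>i<n. excess i)"
  have excess_nonneg: "0 \<le> excess i" for i
    unfolding excess_def by auto
  have excess_le: "excess i \<le> X" if "i < n" for i
    unfolding X_def using that excess_nonneg by (intro member_le_sum) auto
  have "0 \<le> a"
    unfolding a_def short_def by (intro sum_nonneg) auto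
  moreover have "a \<le> int n"
    using sum_mono[of "{..<n}" short "\<lambda>_. 1"] unfolding a_def short_def by auto
  moreover have "X = 0" if "a = int n"
  proof -
    have "(\<Sum>i<n. 1 - short i) = 0"
      using that by (simp add: sum_subtractf a_def)
    then have "\<forall>i\<in>{..<n}. 1 - short i = 0"
      by (subst sum_nonneg_eq_0_iff[symmetric]) (auto simp: short_def)
    then show ?thesis
      unfolding X_def by (intro sum.neutral) (auto simp: short_def excess_def split: if_splits)
  qed
  moreover have "(\<Sum>i<n. b i) \<le> (\<Sum>i<n. 4 - short i + excess i)"
    by (intro sum_mono) (auto simp: short_def excess_def)
  moreover have "(\<Sum>i<n. 4 - 3 * short i + excess i) \<le> (\<Sum>i<n. b i)"
    using burn_pos by (intro sum_mono) (force simp: short_def excess_def)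
  moreover have "(\<Sum>i<n. L * short i + (1 - short i) * (4*m - 2) + excess i * (2*m - 4 - X))
      \<le> (\<Sum>i<n. l i)"
  proof (intro sum_mono)
    fix i assume "i \<in> {..<n}"
    then have i: "i < n"
      by simp
    show "L * short i + (1 - short i) * (4*m - 2) + excess i * (2*m - 4 - X) \<le> l i"
    proof (cases "b i \<le> 3")
      case True
      then show ?thesis
        using min_le[OF i] by (simp add: short_def excess_def)
    next
      case False
      then show ?thesis
        using long_path_lower[OF i] excess_le[OF i] by (simp add: short_def excess_def)
    qed
  qed
  ultimately show thesis
    using that[of a X] path_sum
    by (simp add: a_def X_def sum.distrib sum_subtractf sum_distrib_left sum_distrib_right
        algebra_simps)
qed

lemma min_le_of_large_m:
  assumes large_m: "4 * int n - 2 \<le> m"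
  shows "L \<le> 9 * int n - 6"
proof -
  obtain a X where a: "0 \<le> a" "a \<le> int n" and full: "a = int n \<Longrightarrow> X = 0"
    and upper: "(\<Sum>i<n. b i) \<le> 4 * int n - a + X"
    and lower: "4 * int n - 3 * a + X \<le> (\<Sum>i<n. b i)"
    and paths: "a * L + (int n - a) * (4*m - 2) + X * (2*m - 4 - X) \<le> m^2"
    using short_path_count by blast
  have "a \<noteq> int n"
    using full upper burn_sum large_m n_ge_8 by force
  with a have a_lt: "a \<le> int n - 1"
    by simp
  text \<open>\<open>X\<close> lies in the range \<open>[X\<^sub>0, 2m - 4 - X\<^sub>0]\<close>, on which \<open>X (2m - 4 - X)\<close>
    is smallest at the left end.\<close>
  define X0 where "X0 = m + 2 - 4 * int n + a"
  have "X0 \<le> X"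
    unfolding X0_def using upper burn_sum by linarith
  moreover have "X0 \<le> 2*m - 4 - X"
    unfolding X0_def using lower burn_sum_lt a n_ge_8 by linarith
  ultimately have "X0 * (2*m - 4 - X0) \<le> X * (2*m - 4 - X)"
    using mult_mono[of 0 "X - X0" 0 "2*m - 4 - X - X0"]
    by (simp add: algebra_simps)
  with paths have "a * L \<le> m^2 - (int n - a) * (4*m - 2) - X0 * (2*m - 4 - X0)"
    by linarith
  also have "\<dots> < a * (9 * int n - 5)"
  proof -
    define d where "d = m + 2 - 4 * int n"
    have "0 \<le> d" and "0 \<le> int n - 1 - a"
      using large_m a_lt unfolding d_def by auto
    then have "0 \<le> a * (int n - 1 - a) + 4 * d * (int n - 1 - a)"
      using a by simp
    moreover have "a * (9 * int n - 5) - (m^2 - (int n - a) * (4*m - 2) - X0 * (2*m - 4 - X0))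
        = a * (int n - 1 - a) - 2 * a + 4 * d * (int n - 1 - a) + 6 * int n - 4"
      unfolding X0_def d_def by (simp add: algebra_simps power2_eq_square)
    ultimately show ?thesis
      using a_lt n_ge_8 by linarith
  qed
  finally have "a * L < a * (9 * int n - 5)" .
  then show ?thesis
    using a by (smt (verit) mult_le_cancel_left)
qed

lemma min_le_16n: "L \<le> 16 * int n"
proof (cases "4 * int n - 2 \<le> m")
  case True
  then show ?thesis
    using min_le_of_large_m by simp
next
  case False
  then have "m^2 \<le> (4 * int n - 3)^2"
    using m_nonneg by (intro power_mono) auto
  moreover have "(4 * int n - 3)^2 < int n * (16 * int n)"
    using n_ge_8 by (simp add: power2_eq_square algebra_simps)
  ultimately have "int n * L < int n * (16 * int n)"
    using n_times_min_le by linarith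
  then show ?thesis
    by (simp add: mult_less_cancel_left)
qed

text \<open>It vanishes on paths with \<open>b\<^sub>i = 3, l\<^sub>i = L\<close> and with \<open>b\<^sub>i = 4, l\<^sub>i = 4m - 2\<close>.\<close>
definition deficit :: "nat \<Rightarrow> int" where
  "deficit i = l i - L + (3 - b i) * (4*m - 2 - L)"

lemma deficit_sum_eq:
  "(3*m - L) * (4 * int n - 2 - m)
     = 6 * int n - 4 + (\<Sum>i<n. deficit i) + (4*m - 2 - L) * ((\<Sum>i<n. b i) - m - 2)"
proof -
  have "(\<Sum>i<n. (3 - b i) * (4*m - 2 - L)) = (3 * int n - (\<Sum>i<n. b i)) * (4*m - 2 - L)"
    by (simp add: sum_distrib_right[symmetric] sum_subtractf)
  then have "(\<Sum>i<n. deficit i) = m^2 - int n * L + (3 * int n - (\<Sum>i<n. b i)) * (4*m - 2 - L)"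
    unfolding deficit_def by (simp add: sum.distrib sum_subtractf path_sum)
  then show ?thesis
    by (simp add: algebra_simps power2_eq_square)
qed

context
  assumes small_m: "m \<le> 4 * int n - 3"
    and large_min: "9 * int n - 5 \<le> L"
begin

text \<open>A path with \<open>b\<^sub>i \<ge> L - 2m + 2\<close> would have order at least \<open>x (2m - x) + 2\<close> with
  \<open>x = L - 2m \<ge> n + 1\<close>, which leaves too little room for the other \<open>n - 1\<close> paths of order
  at least \<open>L\<close>.\<close>
lemma burn_le_of_ge_5:
  assumes i: "i < n" and b5: "5 \<le> b i"
  shows "b i \<le> L - 2*m + 1"
proof (rule ccontr)
  define x where "x = L - 2*m"
  assume "\<not> b i \<le> L - 2*m + 1"
  then have long: "x + 2 \<le> b i"
    unfolding x_def by simp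
  have x_lower: "int n + 1 \<le> x" and x_upper: "x \<le> m - 1"
    using long small_m large_min burn_le[OF i] unfolding x_def by auto
  have "(x * (2*m - x) + 2) - ((b i - 2) * (2*m - b i + 2) + 2)
      = - ((b i - x - 2) * (2*m + 2 - b i - x))"
    by (simp add: algebra_simps)
  moreover have "0 \<le> (b i - x - 2) * (2*m + 2 - b i - x)"
    using long burn_le[OF i] by simp
  ultimately have long_path: "x * (2*m - x) + 2 \<le> l i"
    using burn_minimal[OF i] b5 by linarith
  have "l i + (int n - 1) * L \<le> m^2"
  proof -
    have "(\<Sum>j\<in>{..<n}-{i}. L) \<le> (\<Sum>j\<in>{..<n}-{i}. l j)"
      by (rule sum_mono) (auto simp: min_le)
    then show ?thesis
      using i path_sum by (simp add: sum.remove)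
  qed
  moreover have "(x - (int n + 1)) * (m - 1 - x) \<ge> 0"
    using x_lower x_upper by simp
  moreover have "x * (m - 1) \<ge> (int n + 1) * (m - 1)"
    using x_lower m_ge_3 by (intro mult_right_mono) auto
  moreover have "m * (4 * int n - m) \<ge> m * 3"
    using small_m m_nonneg by (intro mult_left_mono) auto
  moreover have "2 * int n \<le> m"
    using min_le_4m large_min by linarith
  ultimately show False
    using long_path n_ge_8 unfolding x_def by (simp add: algebra_simps power2_eq_square)
qed

lemma deficit_ge_of_ge_5:
  assumes i: "i < n" and b5: "5 \<le> b i"
  shows "L - 2*m - 3 \<le> deficit i"
proof -
  have "deficit i - (b i - 4) * (L - 2*m + 2 - b i)
      = l i - ((b i - 2) * (2*m - b i + 2) + 2)"
    unfolding deficit_def by (simp add: algebra_simps)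
  then have "(b i - 4) * (L - 2*m + 2 - b i) \<le> deficit i"
    using burn_minimal[OF i] b5 by linarith
  moreover have "0 \<le> (b i - 5) * (L - 2*m + 1 - b i)"
    using b5 burn_le_of_ge_5[OF i b5] by simp
  ultimately show ?thesis
    by (simp add: algebra_simps)
qed

lemma deficit_nonneg:
  assumes i: "i < n"
  shows "0 \<le> deficit i"
proof -
  consider "b i \<le> 3" | "b i = 4" | "5 \<le> b i"
    by linarith
  then show ?thesis
  proof cases
    case 1
    then show ?thesis
      using min_le[OF i] min_le_4m by (simp add: deficit_def)
  next
    case 2
    then show ?thesis
      using burn_minimal[OF i] by (simp add: deficit_def)
  next
    case 3
    then show ?thesis
      using deficit_ge_of_ge_5[OF i] large_min small_m n_ge_8 by linarith
  qed
qed

lemma min_lt_3m: "L < 3*m"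
proof (rule ccontr)
  assume "\<not> L < 3*m"
  then have "(3*m - L) * (4 * int n - 2 - m) \<le> 0"
    using small_m by (simp add: mult_nonpos_nonneg)
  moreover have "0 \<le> (\<Sum>i<n. deficit i)"
    using deficit_nonneg by (intro sum_nonneg) simp
  moreover have "0 \<le> (4*m - 2 - L) * ((\<Sum>i<n. b i) - m - 2)"
    using min_le_4m burn_sum by simp
  ultimately show False
    using deficit_sum_eq n_ge_8 by linarith
qed

lemma violation_bound:
  assumes i: "i < n" and b: "b i \<notin> {3, 4}"
  shows "6 * int n - 7 + m \<le> (4 * int n - 1 - m) * (3*m - L)"
proof -
  have "L - 2*m - 3 \<le> deficit i"
  proof (cases "b i \<le> 2")
    case True
    then have "4*m - 2 - L \<le> (3 - b i) * (4*m - 2 - L)"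
      using min_le_4m by (simp add: mult_le_cancel_right1)
    then show ?thesis
      using min_le[OF i] min_lt_3m by (simp add: deficit_def)
  next
    case False
    then show ?thesis
      using b deficit_ge_of_ge_5[OF i] by simp
  qed
  moreover have "deficit i \<le> (\<Sum>j<n. deficit j)"
    using i deficit_nonneg by (intro member_le_sum) auto
  moreover have "0 \<le> (4*m - 2 - L) * ((\<Sum>i<n. b i) - m - 2)"
    using min_le_4m burn_sum by simp
  ultimately show ?thesis
    using deficit_sum_eq by (simp add: algebra_simps)
qed

lemma head_burn_ne_4: "b 0 \<noteq> 4"
proof
  assume "b 0 = 4"
  then have "4*m - 2 \<le> L"
    using burn_minimal[of 0] n_ge_8 min_eq by simp
  then show False
    using min_lt_3m m_ge_3 by simp
qed

end

end

lemma sum_list_map_mod_2: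
  fixes f :: "nat \<Rightarrow> nat"
  assumes "\<And>x. x \<in> set xs \<Longrightarrow> f x mod 2 = x mod 2"
  shows "sum_list (map f xs) mod 2 = sum_list xs mod 2"
  using assms by (induction xs) (auto intro: mod_add_cong)

lemma impossibly_burnable_burn_sum:
  assumes "impossibly_burnable m ls"
  shows "m + 2 \<le> sum_list (map (B m) ls)"
proof -
  have pos: "\<forall>x\<in>set ls. 1 \<le> x" and sum: "sum_list ls = m^2"
    and gt: "m < sum_list (map (B m) ls)"
    using assms unfolding impossibly_burnable_def path_forest_of_order_def by auto
  have "x \<le> m^2" if "x \<in> set ls" for x
    using member_le_sum_list[OF that] sum by simp
  then have "sum_list (map (B m) ls) mod 2 = m^2 mod 2"
    using pos B_parity sum by (metis sum_list_map_mod_2)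
  also have "m^2 mod 2 = m mod 2"
    by (simp add: power2_eq_square mod2_eq_if)
  finally show ?thesis
    using gt by presburger
qed

lemma burning_constraints_of_forest:
  assumes n: "8 \<le> n" and len: "length ls = n" and "sorted ls" and ib: "impossibly_burnable m ls"
  shows "burning_constraints n (int m) (int (ls ! 0)) (\<lambda>i. int (ls ! i)) (\<lambda>i. int (B m (ls ! i)))"
proof -
  have pos: "\<forall>x\<in>set ls. 1 \<le> x" and sum: "sum_list ls = m^2"
    using ib unfolding impossibly_burnable_def path_forest_of_order_def by auto
  have pos_i: "1 \<le> ls ! i" and le_i: "ls ! i \<le> m^2" if "i < n" for i
    using that len pos member_le_sum_list[of "ls ! i" ls] sum by auto
  have "(\<Sum>i<n. int (ls ! i)) = int m ^ 2"
    using sum len by (simp add: sum_list_sum_nth atLeast0LessThan flip: of_nat_sum)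
  moreover have "int m + 2 \<le> (\<Sum>i<n. int (B m (ls ! i)))"
    using impossibly_burnable_burn_sum[OF ib] len
    by (simp add: sum_list_sum_nth atLeast0LessThan flip: of_nat_sum)
  moreover have "int (ls ! 0) \<le> int (ls ! i)" if "i < n" for i
    using sorted_nth_mono[OF \<open>sorted ls\<close>, of 0 i] that len by simp
  moreover have "1 \<le> B m (ls ! i)" if "i < n" for i
    using feasible_burn_time_B[OF pos_i le_i, OF that that] by (simp add: feasible_burn_time_def)
  ultimately show ?thesis
    using n pos_i B_le_Suc[OF pos_i le_i] B_lower_bound[OF pos_i le_i]
    by unfold_locales force+
qed

lemma head_le_M:
  assumes "8 \<le> n" and "length ls = n" and "sorted ls" and "impossibly_burnable m ls"
  shows "ls ! 0 \<le> M n"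
  unfolding M_def
proof (rule Greatest_le_nat)
  show "ls ! 0 \<in> {ls ! 0 | ls m. length ls = n \<and> sorted ls \<and> impossibly_burnable m ls}"
    using assms by blast
  fix y
  show "y \<le> 16 * n"
    if head: "y \<in> {ls ! 0 | ls m. length ls = n \<and> sorted ls \<and> impossibly_burnable m ls}"
  proof -
    obtain ls' m' where y: "y = ls' ! 0"
      and forest: "length ls' = n" "sorted ls'" "impossibly_burnable m' ls'"
      using head by blast
    interpret burning_constraints n "int m'" "int (ls' ! 0)" "\<lambda>i. int (ls' ! i)"
        "\<lambda>i. int (B m' (ls' ! i))"
      using burning_constraints_of_forest[OF assms(1) forest] .
    show ?thesis
      using min_le_16n y by simp
  qed
qed

section \<open>The extremal forest\<close>

lemma exists_least_parity_multiple:
  fixes p x s :: nat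
  assumes "0 < p" and "x \<le> p * s"
  obtains r where "r \<le> s" and "r mod 2 = s mod 2" and "x \<le> p * r" and "p * r < x + 2 * p"
proof -
  define P where "P r \<longleftrightarrow> r mod 2 = s mod 2 \<and> x \<le> p * r" for r
  define r where "r = Least P"
  have "P s"
    using assms(2) by (simp add: P_def)
  then have "P r"
    unfolding r_def by (rule LeastI)
  then have r: "r mod 2 = s mod 2 \<and> x \<le> p * r"
    by (simp add: P_def)
  have "r \<le> s"
    unfolding r_def using \<open>P s\<close> by (rule Least_le)
  moreover have "p * r < x + 2 * p"
  proof (cases "r < 2")
    case True
    then have "p * r < p * 2"
      using assms(1) by (rule mult_less_mono2)
    then show ?thesis
      by linarith
  next
    case False
    then have "r - 2 < r"
      by simp
    then have "\<not> P (r - 2)"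
      unfolding r_def by (rule not_less_Least)
    moreover have "(r - 2) mod 2 = s mod 2"
      using r False by (auto simp: mod2_eq_if)
    ultimately have "p * (r - 2) < x"
      by (simp add: P_def)
    moreover have "p * r = p * (r - 2) + 2 * p"
      using False by (simp add: algebra_simps flip: mult_Suc_right)
    ultimately show ?thesis
      by simp
  qed
  ultimately show thesis
    using that r by blast
qed

lemma discriminant_bound:
  fixes p e :: int
  assumes p4: "4 \<le> p" and "0 \<le> e" and "e \<le> 2*p"
  shows "(6*p^2 + 6*p + 3*e - 5)^2 < 12*p^2*(5*p^2 + 5*e - 8)"
proof -
  have "12*p^2*(5*p^2 + 5*e - 8) - (6*p^2 + 6*p + 3*e - 5)^2
      = p^2 * (24*(p^2 - 3*p - 3)) + 60*p - 25 + e*(24*p^2 - 36*p + 30 - 9*e)"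
    by (simp add: algebra_simps power2_eq_square power4_eq_xxxx)
  moreover have "p^2 * 24 \<le> p^2 * (24*(p^2 - 3*p - 3))"
  proof -
    have "4 * 1 \<le> p * (p - 3)"
      using p4 by (intro mult_mono) auto
    then show ?thesis
      by (intro mult_left_mono) (auto simp: algebra_simps power2_eq_square)
  qed
  moreover have "0 \<le> e*(24*p^2 - 36*p + 30 - 9*e)"
  proof -
    have "4 * 42 \<le> p * (24 * p - 54)"
      using p4 by (intro mult_mono) auto
    then have "0 \<le> 24*p^2 - 36*p + 30 - 9*e"
      using assms by (simp add: algebra_simps power2_eq_square)
    then show ?thesis
      using assms by simp
  qed
  moreover have "0 \<le> p^2"
    by simp
  ultimately show ?thesis
    using p4 by linarith
qed

lemma int_floor_sqrt_power2_le: "int (floor_sqrt k) ^ 2 \<le> int k"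
  by (metis floor_sqrt_power2_le of_nat_le_iff of_nat_power)

lemma int_floor_sqrt_power2_gt: "int k < (int (floor_sqrt k) + 1) ^ 2"
  by (metis Suc_floor_sqrt_power2_gt of_nat_Suc of_nat_less_iff of_nat_power add.commute)

lemma floor_sqrt_double_ge_4: "8 \<le> n \<Longrightarrow> 4 \<le> floor_sqrt (2 * n)"
  by (intro le_floor_sqrtI) simp

lemma floor_sqrt_double_lt: "8 \<le> n \<Longrightarrow> floor_sqrt (2 * n) < n"
proof (rule ccontr)
  assume "8 \<le> n" and "\<not> floor_sqrt (2 * n) < n"
  then have "n * n \<le> floor_sqrt (2 * n) ^ 2"
    by (simp add: power2_eq_square mult_mono)
  then have "n * n \<le> 2 * n"
    using floor_sqrt_power2_le order_trans by blast
  moreover have "8 * n \<le> n * n"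
    using \<open>8 \<le> n\<close> by (intro mult_right_mono) auto
  ultimately show False
    using \<open>8 \<le> n\<close> by linarith
qed

text \<open>With \<open>p = \<lfloor>\<surd>(2n)\<rfloor>\<close> and \<open>m = 4n - 2 - p\<close>: \<open>p\<close> paths of burning number 3 and
  \<open>n - p\<close> paths of burning number 4, so that the burning numbers add up to \<open>4n - p = m + 2\<close>.
  The last path absorbs the rounding \<open>p r - (6n - 4)\<close>, making the order exactly \<open>m\<^sup>2\<close>.\<close>
definition extremal_forest :: "nat \<Rightarrow> nat \<Rightarrow> nat \<Rightarrow> nat list" where
  "extremal_forest n p r =
     (let m = 4*n - 2 - p
      in replicate p (3*m - r) @ replicate (n - p - 1) (4*m - 2) @ [4*m - 2 + (p*r - (6*n - 4))])"

text \<open>The conditions on \<open>r\<close> make the first path \<open>3m - r\<close> odd and the rounding term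
  \<open>p r - (6n - 4)\<close> even and below \<open>2p\<close>, as the burning numbers 3 and 4 require;
  \<open>r_le\<close> gives \<open>3m - r \<ge> 9n - 5\<close>.\<close>
locale extremal_parameters =
  fixes n p r :: nat
  assumes n_ge_8: "8 \<le> n"
    and p_def: "p = floor_sqrt (2*n)"
    and r_parity: "r mod 2 = (4*n - 1 - p) mod 2"
    and r_lower: "6*n - 4 \<le> p*r"
    and r_upper: "p*r < 6*n - 4 + 2*p"
    and r_le: "r + 3*p + 1 \<le> 3*n"
begin

definition m :: nat where
  "m = 4*n - 2 - p"

lemma p_ge_4: "4 \<le> p"
  unfolding p_def using n_ge_8 by (rule floor_sqrt_double_ge_4)

lemma p_lt_n: "p < n"
  unfolding p_def using n_ge_8 by (rule floor_sqrt_double_lt)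

lemma int_m: "int m = 4 * int n - 2 - int p"
  using p_lt_n unfolding m_def by simp

lemma p_sq_le: "int p ^ 2 \<le> 2 * int n"
  using int_floor_sqrt_power2_le[of "2*n"] unfolding p_def by simp

lemma p_sq_ge: "2 * int n \<le> int p ^ 2 + 2 * int p"
  using int_floor_sqrt_power2_gt[of "2*n"] unfolding p_def by (simp add: power2_eq_square algebra_simps)

lemma r_le_3m: "r \<le> 3*m"
  using r_le int_m by linarith

lemma int_head: "int (3*m - r) = 3 * int m - int r"
  using r_le_3m by simp

lemma even_r_iff: "even r \<longleftrightarrow> odd m"
proof -
  have "4*n - 1 - p = m + 1"
    using p_lt_n unfolding m_def by simp
  then have "even r \<longleftrightarrow> even (m + 1)"
    using r_parity by (simp add: even_iff_mod_2_eq_zero)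
  then show ?thesis
    by simp
qed

lemma int_bulk: "int (4*m - 2) = 4 * int m - 2"
  using int_m p_lt_n by simp

lemma int_rounding: "int (p*r - (6*n - 4)) = int p * int r - (6 * int n - 4)"
  using r_lower n_ge_8 by (simp add: of_nat_diff)

lemma int_r_upper: "int p * int r \<le> 6 * int n - 5 + 2 * int p"
proof -
  have "int (p*r) < int (6*n - 4 + 2*p)"
    using r_upper by (simp only: of_nat_less_iff)
  then show ?thesis
    using n_ge_8 by (simp add: of_nat_diff)
qed

lemma head_ge: "9*n - 5 \<le> 3*m - r"
  using r_le int_m int_head by linarith

lemma extremal_forest_eq:
  "extremal_forest n p r
     = replicate p (3*m - r) @ replicate (n - p - 1) (4*m - 2) @ [4*m - 2 + (p*r - (6*n - 4))]"
  unfolding extremal_forest_def m_def Let_def ..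

lemma length_extremal_forest: "length (extremal_forest n p r) = n"
  using p_lt_n by (simp add: extremal_forest_eq)

lemma extremal_forest_head: "extremal_forest n p r ! 0 = 3*m - r"
  using p_ge_4 by (simp add: extremal_forest_eq nth_append)

lemma head_le_bulk: "3*m - r \<le> 4*m - 2"
  using int_head int_m p_lt_n n_ge_8 by simp

lemma sorted_extremal_forest: "sorted (extremal_forest n p r)"
  using head_le_bulk by (auto simp: extremal_forest_eq sorted_append)

lemma sum_extremal_forest: "sum_list (extremal_forest n p r) = m^2"
proof -
  have "int (sum_list (extremal_forest n p r))
      = int p * int (3*m - r) + (int n - int p - 1) * int (4*m - 2)
        + int (4*m - 2) + int (p*r - (6*n - 4))"
    using p_lt_n by (simp add: extremal_forest_eq sum_list_replicate of_nat_diff)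
  also have "\<dots> = int m ^ 2"
    unfolding int_head int_bulk int_rounding int_m by (simp add: algebra_simps power2_eq_square)
  finally show ?thesis
    by (simp flip: of_nat_power)
qed

lemma B_head: "B m (3*m - r) = 3"
proof (rule B_eqI)
  define x where "x = 3*m - r"
  have "x + r = 3*m"
    using r_le_3m unfolding x_def by simp
  then have "even (x + r) \<longleftrightarrow> even m"
    by simp
  then have "odd x"
    using even_r_iff by auto
  then show "3 mod 2 = (3*m - r) mod 2"
    unfolding x_def[symmetric] by (simp add: odd_iff_mod_2_eq_one)
  show "int (3*m - r) \<le> 2 * int m * int 3 - int 3 ^ 2"
    using int_head int_m p_lt_n n_ge_8 by simp
  show "3 \<le> 2 \<or> 2 * int m * (int 3 - 2) - (int 3 - 2)^2 < int (3*m - r)"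
    using int_head int_m r_le by simp
qed (use int_m p_lt_n in auto)

lemma B_bulk: "B m (4*m - 2) = 4"
  using int_m p_lt_n n_ge_8 by (intro B_eq_4) auto

lemma B_last: "B m (4*m - 2 + (p*r - (6*n - 4))) = 4"
proof (rule B_eq_4)
  have "even (p*r)"
  proof (cases "even p")
    case False
    have "m + p = 2 * (2*n - 1)"
      using p_lt_n unfolding m_def by simp
    then have "even (m + p)"
      by simp
    then have "even r"
      using even_r_iff False by simp
    then show ?thesis
      by simp
  qed simp
  then show "even (4*m - 2 + (p*r - (6*n - 4)))"
    using int_m p_lt_n n_ge_8 by auto
  show "4*m - 4 < 4*m - 2 + (p*r - (6*n - 4))"
    using int_m p_lt_n n_ge_8 by linarith
  show "4*m - 2 + (p*r - (6*n - 4)) + 16 \<le> 8*m"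
    using int_m int_rounding r_upper p_lt_n n_ge_8 by linarith
qed (use int_m p_lt_n n_ge_8 in linarith)

lemma impossibly_burnable_extremal_forest: "impossibly_burnable m (extremal_forest n p r)"
proof -
  have "sum_list (map (B m) (extremal_forest n p r)) = 3*p + 4*(n - p)"
    using B_head B_bulk B_last p_lt_n
    by (simp add: extremal_forest_eq sum_list_replicate algebra_simps)
  moreover have "\<forall>x\<in>set (extremal_forest n p r). 1 \<le> x"
    using head_ge head_le_bulk n_ge_8 by (auto simp: extremal_forest_eq)
  ultimately show ?thesis
    unfolding impossibly_burnable_def path_forest_of_order_def
    using sum_extremal_forest int_m p_lt_n by auto
qed

text \<open>The inequality of \<open>violation_bound\<close> forces \<open>L\<close> below the head of the extremal forest:
  after multiplying out, the difference is a quadratic in \<open>4n - 1 - m'\<close> with negative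
  discriminant.\<close>
lemma min_lt_head_of_violation:
  fixes m' L :: int
  assumes small: "m' \<le> 4 * int n - 2"
    and violation: "6 * int n - 7 + m' \<le> (4 * int n - 1 - m') * (3*m' - L)"
  shows "L < int (3*m - r)"
proof -
  define P R N where "P = int p" and "R = int r" and "N = int n"
  define K where "K = 4*N - 1 - m'"
  define Y where "Y = 3*m' - L"
  define e where "e = 2*N - P^2"
  define c where "c = 3*P^2 + 6*P + 6*N - 5"
  have P4: "4 \<le> P"
    using p_ge_4 unfolding P_def by simp
  have K1: "1 \<le> K"
    using small unfolding K_def N_def by simp
  have "0 \<le> e" and "e \<le> 2*P"
    using p_sq_le p_sq_ge unfolding e_def P_def N_def by auto
  moreover have "c = 6*P^2 + 6*P + 3*e - 5" and "10*N - 8 = 5*P^2 + 5*e - 8"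
    unfolding c_def e_def by simp_all
  ultimately have disc: "c^2 < 12*P^2*(10*N - 8)"
    using discriminant_bound[OF P4] by simp
  define Q where "Q = 3*P*K^2 - c*K + P*(10*N - 8)"
  have "12*P*Q = (6*P*K - c)^2 + (12*P^2*(10*N - 8) - c^2)"
    unfolding Q_def by (simp add: algebra_simps power2_eq_square)
  then have "0 < Q"
    using disc P4 by (smt (verit) zero_le_power2 zero_less_mult_iff)
  have "P * (K*Y) \<ge> P * (10*N - 8 - K)"
    using violation P4 unfolding K_def Y_def N_def by (intro mult_left_mono) auto
  moreover have "K * (P*R) \<le> K * (6*N - 5 + 2*P)"
    using int_r_upper K1 unfolding P_def R_def N_def by (intro mult_left_mono) auto
  ultimately have "Q \<le> P*K*(Y + 3*K - 3 - 3*P - R)"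
    unfolding Q_def c_def by (simp add: algebra_simps power2_eq_square)
  then have "0 < Y + 3*K - 3 - 3*P - R"
    using \<open>0 < Q\<close> P4 K1 by (smt (verit) mult_pos_pos zero_less_mult_iff)
  then show ?thesis
    unfolding Y_def K_def P_def R_def N_def using int_head int_m by simp
qed

end

lemma floor_sqrt_double_mult_ge:
  assumes n: "8 \<le> n" and p: "p = floor_sqrt (2*n)"
  shows "6*n - 4 \<le> p * (3*n - 3*p - 2 + (if even n then 1 else 0))"
proof -
  define d :: nat where "d = (if even n then 1 else 0)"
  have p4: "4 \<le> p" and pn: "p < n"
    unfolding p using floor_sqrt_double_ge_4[OF n] floor_sqrt_double_lt[OF n] .
  have sq: "int p ^ 2 \<le> 2 * int n"
    using int_floor_sqrt_power2_le[of "2*n"] unfolding p by simp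
  define s where "s = 3*n - 3*p - 2 + d"
  have int_s: "int s = 3 * int n - 3 * int p - 2 + int d"
    using pn unfolding s_def by simp
  have "int (p * s) - (6 * int n - 4)
      = (int p - 4) * (3 * int n - 2) + 3 * (2 * int n - int p ^ 2) - 4 + int p * int d"
    by (simp add: int_s algebra_simps power2_eq_square)
  moreover have "4 \<le> (int p - 4) * (3 * int n - 2) + 3 * (2 * int n - int p ^ 2) + int p * int d"
  proof (cases "p = 4")
    case True
    have "9 \<le> n \<or> d = 1"
      using n by (cases "n = 8") (auto simp: d_def)
    then show ?thesis
      using True sq by auto
  next
    case False
    then have "3 * int n - 2 \<le> (int p - 4) * (3 * int n - 2)"
      using p4 n mult_right_mono[of 1 "int p - 4" "3 * int n - 2"] by simp
    moreover have "0 \<le> int p * int d" and "8 \<le> int n"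
      using n by simp_all
    ultimately show ?thesis
      using sq by (smt (verit))
  qed
  ultimately show ?thesis
    using n unfolding s_def d_def by linarith
qed

lemma extremal_parameters_exist:
  assumes n: "8 \<le> n"
  shows "\<exists>r. extremal_parameters n (floor_sqrt (2*n)) r"
proof -
  define p where "p = floor_sqrt (2*n)"
  define d :: nat where "d = (if even n then 1 else 0)"
  define s where "s = 3*n - 3*p - 2 + d"
  have p4: "4 \<le> p" and pn: "p < n"
    unfolding p_def using floor_sqrt_double_ge_4[OF n] floor_sqrt_double_lt[OF n] .
  obtain r where "r \<le> s" and "r mod 2 = s mod 2" and "6*n - 4 \<le> p * r"
    and "p * r < 6*n - 4 + 2*p"
    using exists_least_parity_multiple[of p "6*n - 4" s] floor_sqrt_double_mult_ge[OF n p_def] p4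
    unfolding s_def d_def by auto
  moreover have "s + 3*p + 1 \<le> 3*n"
    using pn unfolding s_def d_def by auto
  moreover have "s mod 2 = (4*n - 1 - p) mod 2"
  proof -
    have "int (4*n - 1 - p) - int s = (int n + 1 - int d) + 2 * int p"
      using pn unfolding s_def by simp
    moreover have "even (int n + 1 - int d)"
      by (simp add: d_def)
    ultimately have "even (int (4*n - 1 - p) - int s)"
      by simp
    then have "even (4*n - 1 - p) \<longleftrightarrow> even s"
      by (simp only: even_diff even_add even_of_nat)
    then show ?thesis
      by (simp add: mod2_eq_if)
  qed
  ultimately have "extremal_parameters n p r"
    using n p_def by unfold_locales auto
  then show ?thesis
    unfolding p_def ..
qed

theorem mainTheorem5:
  fixes n m :: nat and l :: "nat list"
  assumes "n \<ge> 8"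
    and "length l = n"
    and "sorted l"
    and "impossibly_burnable m l"
    and "l ! 0 = M n"
  shows "(\<forall>i<n. B m (l ! i) \<in> {3, 4}) \<and> odd (l ! 0) \<and> B m (l ! 0) = 3"
proof -
  obtain r where "extremal_parameters n (floor_sqrt (2*n)) r"
    using extremal_parameters_exist[OF assms(1)] by blast
  then interpret E: extremal_parameters n "floor_sqrt (2*n)" r .
  interpret F: burning_constraints n "int m" "int (l ! 0)" "\<lambda>i. int (l ! i)"
      "\<lambda>i. int (B m (l ! i))"
    using burning_constraints_of_forest[OF assms(1-4)] .
  have head: "3 * E.m - r \<le> l ! 0"
    using head_le_M[OF assms(1) E.length_extremal_forest E.sorted_extremal_forest
        E.impossibly_burnable_extremal_forest] E.extremal_forest_head assms(5) by simp
  then have large_min: "9 * int n - 5 \<le> int (l ! 0)"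
    using E.head_ge by linarith
  then have small_m: "int m \<le> 4 * int n - 3"
    using F.min_le_of_large_m by fastforce
  have burn_34: "B m (l ! i) \<in> {3, 4}" if "i < n" for i
  proof (rule ccontr)
    assume "B m (l ! i) \<notin> {3, 4}"
    then have "6 * int n - 7 + int m \<le> (4 * int n - 1 - int m) * (3 * int m - int (l ! 0))"
      using F.violation_bound[OF small_m large_min that] by auto
    then have "int (l ! 0) < int (3 * E.m - r)"
      using small_m by (intro E.min_lt_head_of_violation) simp_all
    then show False
      using head by simp
  qed
  then have "B m (l ! 0) = 3"
    using F.head_burn_ne_4[OF small_m large_min] assms(1) by fastforce
  moreover have "l ! 0 mod 2 = B m (l ! 0) mod 2"
    using F.path_pos[of 0] F.path_le[of 0] assms(1) by (simp add: B_parity)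
  ultimately show ?thesis
    using burn_34 by (simp add: odd_iff_mod_2_eq_one)
qed

end
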